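(* The optimal value of problem (D) equals the optimal value of the mixed-integer linear program: minimize $B$ over $B\in\mathbb{N}$ and $\gamma\in\{0,1\}^{\mathcal{C}\times\mathcal{N}}$ subject to $\sum_{g\in\mathcal{N}}\gamma_{c,g}=|\mathcal{N}_c|$ for all $c\in\mathcal{C}$; $\sum_{c\in\mathcal{C}}\gamma_{c,g}=1$ for all $g\in\mathcal{N}$; $B\ge\frac{1}{v_c}\sum_{g\in\mathcal{N}}g\,\gamma_{c,g}$ for all $c\in\mathcal{C}$; and $B\ge N$. Moreover, from any optimal solution $(B,\gamma)$ of this program one can construct a feasible solution of (D) with the same value $B$.
   Context: A ballot style consists of contests $\mathcal{C}=\{1,\ldots,C\}$, candidates $\mathcal{N}=\{1,\ldots,N\}$ (identified with the integers $1,\ldots,N$) partitioned into nonempty sets $\mathcal{N}_c$ ($c\in\mathcal{C}$), and positive integers $v_c$. $\mathscr{B}=\{\beta\subseteq\mathcal{N}: |\mathcal{N}_c\cap\beta|\le v_c\ \forall c\}$. Problem (D): minimize $B$ over $B\in\mathbb{N}$ and $\beta_1,\ldots,\beta_B\in\mathscr{B}$ subject to $|\{b\in\{1,\ldots,B\}: i\in\beta_b\}|\neq|\{b\in\{1,\ldots,B\}: j\in\beta_b\}|$ for all distinct $i,j\in\mathcal{N}$, and $|\{b\in\{1,\ldots,B\}: i\in\beta_b\}|\ge1$ for all $i\in\mathcal{N}$. *)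

theory Defs
  imports Complex_Main
begin

text \<open>Contests are 1..C, candidates 1..N; Ncand c is the candidate set of contest c,
  v c its vote limit.\<close>

definition ballots :: "nat \<Rightarrow> (nat \<Rightarrow> nat set) \<Rightarrow> (nat \<Rightarrow> nat) \<Rightarrow> nat \<Rightarrow> nat set set" where
  "ballots C Ncand v N = {\<beta>. \<beta> \<subseteq> {1..N} \<and> (\<forall>c\<in>{1..C}. card (Ncand c \<inter> \<beta>) \<le> v c)}"

definition occ :: "nat \<Rightarrow> (nat \<Rightarrow> nat set) \<Rightarrow> nat \<Rightarrow> nat" where
  "occ B bs i = card {b \<in> {1..B}. i \<in> bs b}"

definition D_solution :: "nat \<Rightarrow> (nat \<Rightarrow> nat set) \<Rightarrow> (nat \<Rightarrow> nat) \<Rightarrow> nat \<Rightarrow> nat \<Rightarrow> (nat \<Rightarrow> nat set) \<Rightarrow> bool" where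
  "D_solution C Ncand v N B bs \<longleftrightarrow>
     (\<forall>b\<in>{1..B}. bs b \<in> ballots C Ncand v N) \<and>
     (\<forall>i\<in>{1..N}. \<forall>j\<in>{1..N}. i \<noteq> j \<longrightarrow> occ B bs i \<noteq> occ B bs j) \<and>
     (\<forall>i\<in>{1..N}. occ B bs i \<ge> 1)"

definition D_feasible :: "nat \<Rightarrow> (nat \<Rightarrow> nat set) \<Rightarrow> (nat \<Rightarrow> nat) \<Rightarrow> nat \<Rightarrow> nat \<Rightarrow> bool" where
  "D_feasible C Ncand v N B \<longleftrightarrow> (\<exists>bs. D_solution C Ncand v N B bs)"

definition M_solution :: "nat \<Rightarrow> (nat \<Rightarrow> nat set) \<Rightarrow> (nat \<Rightarrow> nat) \<Rightarrow> nat \<Rightarrow> nat \<Rightarrow> (nat \<Rightarrow> nat \<Rightarrow> nat) \<Rightarrow> bool" where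
  "M_solution C Ncand v N B \<gamma> \<longleftrightarrow>
     (\<forall>c\<in>{1..C}. \<forall>g\<in>{1..N}. \<gamma> c g \<in> {0, 1}) \<and>
     (\<forall>c\<in>{1..C}. (\<Sum>g\<in>{1..N}. \<gamma> c g) = card (Ncand c)) \<and>
     (\<forall>g\<in>{1..N}. (\<Sum>c\<in>{1..C}. \<gamma> c g) = 1) \<and>
     (\<forall>c\<in>{1..C}. real B \<ge> (1 / real (v c)) * (\<Sum>g\<in>{1..N}. real g * real (\<gamma> c g))) \<and>
     B \<ge> N"

definition M_feasible :: "nat \<Rightarrow> (nat \<Rightarrow> nat set) \<Rightarrow> (nat \<Rightarrow> nat) \<Rightarrow> nat \<Rightarrow> nat \<Rightarrow> bool" where
  "M_feasible C Ncand v N B \<longleftrightarrow> (\<exists>\<gamma>. M_solution C Ncand v N B \<gamma>)"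

definition M_optimal :: "nat \<Rightarrow> (nat \<Rightarrow> nat set) \<Rightarrow> (nat \<Rightarrow> nat) \<Rightarrow> nat \<Rightarrow> nat \<Rightarrow> (nat \<Rightarrow> nat \<Rightarrow> nat) \<Rightarrow> bool" where
  "M_optimal C Ncand v N B \<gamma> \<longleftrightarrow>
     M_solution C Ncand v N B \<gamma> \<and> (\<forall>B'. M_feasible C Ncand v N B' \<longrightarrow> B \<le> B')"

end

theory Submission
  imports Defs "HOL-Library.Disjoint_Sets"
begin

text \<open>Both programs are feasible for exactly the same B: those B \<ge> N admitting a bijection
  \<sigma> of {1..N} with \<Sum>i\<in>N_c. \<sigma> i \<le> v_c B for every contest c, where \<sigma> i is the number
  of ballots that are to list candidate i. From a solution of (D), \<sigma> is the rank of the
  (distinct, positive) occurrence counts; it is pointwise below them, and counting the ballots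
  contest by contest gives the capacity bound. The MILP solution belonging to \<sigma> is
  \<gamma>_{c,g} = [g \<in> \<sigma>(N_c)]; conversely a 0/1 matrix \<gamma> splits {1..N} into sets of sizes |N_c|,
  and bijections of the N_c onto them glue to \<sigma>. Finally \<sigma> is realised by ballots contest
  by contest with McNaughton's wrap-around rule: lay out \<sigma> i consecutive slots for every
  candidate i \<in> N_c, v_c B slots in total, and send slot p to ballot p mod B + 1.\<close>

lemma disjoint_family_on_prefix_sum_intervals:
  fixes K :: "'a::linorder set" and d :: "'a \<Rightarrow> nat"
  assumes "finite K"
  obtains P where "disjoint_family_on (\<lambda>i. {P i..<P i + d i}) K"
    and "\<And>i. i \<in> K \<Longrightarrow> P i + d i \<le> sum d K"
proof -
  define P where "P i = sum d {j \<in> K. j < i}" for i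
  have P_add: "P i + d i = sum d {j \<in> K. j \<le> i}" if "i \<in> K" for i
  proof -
    have "{j \<in> K. j \<le> i} = insert i {j \<in> K. j < i}" using that by auto
    then show ?thesis unfolding P_def using assms by (simp add: add.commute)
  qed
  have before: "P i + d i \<le> P j" if "i \<in> K" "j \<in> K" "i < j" for i j
  proof -
    have "sum d {j \<in> K. j \<le> i} \<le> P j"
      unfolding P_def by (rule sum_mono2) (use assms that in auto)
    then show ?thesis using P_add[OF that(1)] by simp
  qed
  have "disjoint_family_on (\<lambda>i. {P i..<P i + d i}) K"
    unfolding disjoint_family_on_def
  proof (intro ballI impI)
    fix i j assume "i \<in> K" "j \<in> K" "i \<noteq> j"
    then consider "i < j" | "j < i" by fastforce
    then show "{P i..<P i + d i} \<inter> {P j..<P j + d j} = {}"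
      by cases (use before \<open>i \<in> K\<close> \<open>j \<in> K\<close> in fastforce)+
  qed
  moreover have "P i + d i \<le> sum d K" if "i \<in> K" for i
    unfolding P_add[OF that] by (rule sum_mono2) (use assms in auto)
  ultimately show ?thesis by (rule that)
qed

lemma inj_on_mod_atLeastLessThan:
  fixes a k B :: nat
  assumes "k \<le> B"
  shows "inj_on (\<lambda>p. p mod B) {a..<a + k}"
proof (rule linorder_inj_onI')
  fix p q assume "p \<in> {a..<a + k}" "q \<in> {a..<a + k}" "p < q"
  then have "0 < q - p" "q - p < B" using assms by auto
  then have "\<not> B dvd q - p" using nat_dvd_not_less by blast
  then show "p mod B \<noteq> q mod B" using \<open>p < q\<close> mod_eq_dvd_iff_nat[of p q B] by auto
qed

lemma card_residue_class_le:
  fixes v B k :: nat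
  shows "card {p. p < v * B \<and> p mod B = k} \<le> v"
proof -
  have "inj_on (\<lambda>p. p div B) {p. p < v * B \<and> p mod B = k}"
    by (rule inj_onI) (metis (mono_tags, lifting) div_mod_decomp mem_Collect_eq)
  moreover have "(\<lambda>p. p div B) ` {p. p < v * B \<and> p mod B = k} \<subseteq> {..<v}"
    by (auto simp: less_mult_imp_div_less)
  ultimately have "card {p. p < v * B \<and> p mod B = k} \<le> card {..<v}"
    by (rule card_inj_on_le) simp
  then show ?thesis by simp
qed

lemma wrap_around_schedule:
  fixes K :: "'a::linorder set" and d :: "'a \<Rightarrow> nat" and B v :: nat
  assumes fin: "finite K" and short: "\<And>i. i \<in> K \<Longrightarrow> d i \<le> B" and total: "sum d K \<le> v * B"
  obtains A where "\<And>b. A b \<subseteq> K" and "\<And>b. b \<in> {1..B} \<Longrightarrow> card (A b) \<le> v"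
    and "\<And>i. i \<in> K \<Longrightarrow> card {b \<in> {1..B}. i \<in> A b} = d i"
proof -
  obtain P where disj: "disjoint_family_on (\<lambda>i. {P i..<P i + d i}) K"
    and bound: "\<And>i. i \<in> K \<Longrightarrow> P i + d i \<le> sum d K"
    using disjoint_family_on_prefix_sum_intervals[OF fin] by blast
  define A where "A b = {i \<in> K. \<exists>p \<in> {P i..<P i + d i}. Suc (p mod B) = b}" for b
  have count: "card {b \<in> {1..B}. i \<in> A b} = d i" if i: "i \<in> K" for i
  proof -
    have "{b \<in> {1..B}. i \<in> A b} = (\<lambda>p. Suc (p mod B)) ` {P i..<P i + d i}"
    proof (intro equalityI subsetI)
      fix b assume "b \<in> (\<lambda>p. Suc (p mod B)) ` {P i..<P i + d i}"
      then obtain p where p: "p \<in> {P i..<P i + d i}" and b: "b = Suc (p mod B)" by blast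
      then have "0 < B" using short[OF i] by simp
      then show "b \<in> {b \<in> {1..B}. i \<in> A b}" using i p b by (auto simp: A_def Suc_le_eq)
    qed (auto simp: A_def)
    moreover have "inj_on (\<lambda>p. Suc (p mod B)) {P i..<P i + d i}"
      using inj_on_mod_atLeastLessThan[OF short[OF i]] by (simp add: inj_on_def)
    ultimately show ?thesis by (simp add: card_image)
  qed
  have capacity: "card (A b) \<le> v" if b: "b \<in> {1..B}" for b
  proof -
    have "\<forall>i \<in> A b. \<exists>p. p \<in> {P i..<P i + d i} \<and> Suc (p mod B) = b"
      unfolding A_def by blast
    then obtain pos where pos: "\<And>i. i \<in> A b \<Longrightarrow> pos i \<in> {P i..<P i + d i} \<and> Suc (pos i mod B) = b"
      by metis
    have "inj_on pos (A b)"
    proof (rule inj_onI)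
      fix i j assume ij: "i \<in> A b" "j \<in> A b" and "pos i = pos j"
      then have "pos i \<in> {P i..<P i + d i} \<inter> {P j..<P j + d j}" using pos[OF ij(1)] pos[OF ij(2)] by simp
      moreover have "i \<in> K" "j \<in> K" using ij by (auto simp: A_def)
      ultimately show "i = j" using disjoint_family_onD[OF disj] by blast
    qed
    moreover have "pos ` A b \<subseteq> {p. p < v * B \<and> p mod B = b - 1}"
    proof (rule image_subsetI)
      fix i assume i: "i \<in> A b"
      then have "pos i < sum d K" using pos[OF i] bound[of i] by (auto simp: A_def)
      then show "pos i \<in> {p. p < v * B \<and> p mod B = b - 1}" using pos[OF i] total by auto
    qed
    ultimately have "card (A b) \<le> card {p. p < v * B \<and> p mod B = b - 1}"
      by (rule card_inj_on_le) simp
    then show ?thesis using card_residue_class_le le_trans by blast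
  qed
  show ?thesis by (rule that[OF _ capacity count]) (auto simp: A_def)
qed

lemma bij_betw_UN_disjoint_family:
  assumes bij: "\<And>i. i \<in> I \<Longrightarrow> bij_betw (h i) (A i) (G i)"
    and disjA: "disjoint_family_on A I" and disjG: "disjoint_family_on G I"
  obtains f where "bij_betw f (\<Union>i\<in>I. A i) (\<Union>i\<in>I. G i)"
    and "\<And>i x. i \<in> I \<Longrightarrow> x \<in> A i \<Longrightarrow> f x = h i x"
proof -
  define f where "f x = h (SOME i. i \<in> I \<and> x \<in> A i) x" for x
  have f_eq: "f x = h i x" if "i \<in> I" "x \<in> A i" for i x
  proof -
    have "(SOME i. i \<in> I \<and> x \<in> A i) = i"
      using that disjoint_family_onD[OF disjA] by (intro some_equality) blast+
    then show ?thesis by (simp add: f_def)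
  qed
  have "inj_on f (\<Union>i\<in>I. A i)"
  proof (rule inj_onI)
    fix x y assume "x \<in> (\<Union>i\<in>I. A i)" "y \<in> (\<Union>i\<in>I. A i)" and eq: "f x = f y"
    then obtain i j where i: "i \<in> I" "x \<in> A i" and j: "j \<in> I" "y \<in> A j" by blast
    have "h i x \<in> G i" "h j y \<in> G j" using bij i j by (auto dest: bij_betw_apply)
    then have "i = j" using eq f_eq i j disjoint_family_onD[OF disjG] by fastforce
    then show "x = y" using eq f_eq i j bij by (metis bij_betw_imp_inj_on inj_onD)
  qed
  moreover have "f ` (\<Union>i\<in>I. A i) = (\<Union>i\<in>I. G i)"
  proof -
    have "f ` A i = G i" if "i \<in> I" for i
      using f_eq[OF that] bij_betw_imp_surj_on[OF bij[OF that]] by (simp cong: image_cong)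
    then show ?thesis by (simp add: image_UN)
  qed
  ultimately show ?thesis using that f_eq by (blast intro: bij_betw_imageI)
qed

lemma rank_bij_betw:
  fixes f :: "'a \<Rightarrow> 'b::linorder"
  assumes fin: "finite A" and inj: "inj_on f A"
  shows "bij_betw (\<lambda>i. card {j \<in> A. f j \<le> f i}) A {1..card A}"
proof -
  let ?r = "\<lambda>i. card {j \<in> A. f j \<le> f i}"
  have mono: "?r i < ?r j" if "i \<in> A" "j \<in> A" "f i < f j" for i j
  proof (rule psubset_card_mono)
    have "{k \<in> A. f k \<le> f i} \<subseteq> {k \<in> A. f k \<le> f j}" using that(3) by auto
    moreover have "j \<notin> {k \<in> A. f k \<le> f i}" using that(3) by auto
    ultimately show "{k \<in> A. f k \<le> f i} \<subset> {k \<in> A. f k \<le> f j}" using that(2) by blast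
  qed (use fin in simp)
  have "inj_on ?r A"
  proof (rule inj_onI)
    fix i j assume ij: "i \<in> A" "j \<in> A" and eq: "?r i = ?r j"
    show "i = j"
    proof (rule ccontr)
      assume "i \<noteq> j"
      then have "f i \<noteq> f j" using inj ij by (auto dest: inj_onD)
      then consider "f i < f j" | "f j < f i" by (meson linorder_neqE)
      then show False using mono[OF ij] mono[OF ij(2,1)] eq by cases auto
    qed
  qed
  moreover have "?r ` A \<subseteq> {1..card A}"
  proof (rule image_subsetI)
    fix i assume "i \<in> A"
    then have "0 < ?r i" using fin by (subst card_gt_0_iff) auto
    moreover have "?r i \<le> card A" using fin by (intro card_mono) auto
    ultimately show "?r i \<in> {1..card A}" by simp
  qed
  moreover have "card (?r ` A) = card {1..card A}" using card_image[OF \<open>inj_on ?r A\<close>] by simp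
  ultimately show ?thesis by (simp add: bij_betw_def card_subset_eq)
qed

lemma rank_le:
  fixes f :: "'a \<Rightarrow> nat"
  assumes inj: "inj_on f A" and pos: "\<And>j. j \<in> A \<Longrightarrow> 1 \<le> f j"
  shows "card {j \<in> A. f j \<le> f i} \<le> f i"
proof -
  have "card {j \<in> A. f j \<le> f i} \<le> card {1..f i}"
    by (rule card_inj_on_le[of f]) (use inj pos in \<open>auto intro: inj_on_subset\<close>)
  then show ?thesis by simp
qed

lemma occ_le: "occ B bs i \<le> B"
proof -
  have "occ B bs i \<le> card {1..B}" unfolding occ_def by (rule card_mono) auto
  then show ?thesis by simp
qed

lemma sum_occ_eq_sum_card_inter:
  assumes "finite S"
  shows "(\<Sum>i\<in>S. occ B bs i) = (\<Sum>b\<in>{1..B}. card (S \<inter> bs b))"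
proof -
  have "(\<Sum>i\<in>S. occ B bs i) = (\<Sum>i\<in>S. \<Sum>b\<in>{1..B}. of_bool (i \<in> bs b))"
    unfolding occ_def by (simp add: Int_def conj_commute)
  also have "\<dots> = (\<Sum>b\<in>{1..B}. \<Sum>i\<in>S. of_bool (i \<in> bs b))" by (rule sum.swap)
  also have "\<dots> = (\<Sum>b\<in>{1..B}. card (S \<inter> bs b))" using assms by (simp add: Int_def)
  finally show ?thesis .
qed

lemma weighted_sum_bound_iff:
  fixes w :: "nat \<Rightarrow> nat" and B k :: nat
  assumes "0 < k"
  shows "real B \<ge> (1 / real k) * (\<Sum>g\<in>G. real g * real (w g)) \<longleftrightarrow> (\<Sum>g\<in>G. g * w g) \<le> k * B"
proof -
  have "(\<Sum>g\<in>G. real g * real (w g)) = real (\<Sum>g\<in>G. g * w g)" by simp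
  then show ?thesis using assms by (simp add: field_simps del: of_nat_sum) (metis of_nat_le_iff of_nat_mult)
qed

lemma sum_binary_eq_card:
  fixes f :: "'a \<Rightarrow> nat"
  assumes "finite A" and "\<And>x. x \<in> A \<Longrightarrow> f x \<in> {0, 1}"
  shows "sum f A = card {x \<in> A. f x = 1}"
proof -
  have "sum f A = (\<Sum>x\<in>A. of_bool (f x = 1))" using assms(2) by (intro sum.cong) auto
  then show ?thesis using assms(1) by (simp add: Int_def)
qed

lemma sum_mult_binary_eq:
  fixes f w :: "'a \<Rightarrow> nat"
  assumes "finite A" and "\<And>x. x \<in> A \<Longrightarrow> f x \<in> {0, 1}"
  shows "(\<Sum>x\<in>A. w x * f x) = sum w {x \<in> A. f x = 1}"
proof -
  have "(\<Sum>x\<in>A. w x * f x) = (\<Sum>x\<in>A. w x * of_bool (f x = 1))" using assms(2) by (intro sum.cong) auto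
  then show ?thesis using assms(1) by (simp add: Int_def)
qed

lemma binary_column_sums_one_partition:
  fixes \<gamma> :: "'i \<Rightarrow> 'g \<Rightarrow> nat"
  assumes fin: "finite I" and binary: "\<And>i g. i \<in> I \<Longrightarrow> g \<in> X \<Longrightarrow> \<gamma> i g \<in> {0, 1}"
    and column: "\<And>g. g \<in> X \<Longrightarrow> (\<Sum>i\<in>I. \<gamma> i g) = 1"
  shows "disjoint_family_on (\<lambda>i. {g \<in> X. \<gamma> i g = 1}) I"
    and "(\<Union>i\<in>I. {g \<in> X. \<gamma> i g = 1}) = X"
proof -
  have single: "\<exists>i0. {i \<in> I. \<gamma> i g = 1} = {i0}" if g: "g \<in> X" for g
    using column[OF g] sum_binary_eq_card[OF fin binary[OF _ g]] by (simp add: card_1_singleton_iff)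
  show "disjoint_family_on (\<lambda>i. {g \<in> X. \<gamma> i g = 1}) I"
    unfolding disjoint_family_on_def
  proof (intro ballI impI equals0I)
    fix i j g assume "i \<in> I" "j \<in> I" "i \<noteq> j" and g: "g \<in> {g \<in> X. \<gamma> i g = 1} \<inter> {g \<in> X. \<gamma> j g = 1}"
    then obtain i0 where i0: "{i \<in> I. \<gamma> i g = 1} = {i0}" using single by blast
    have "i \<in> {i \<in> I. \<gamma> i g = 1}" "j \<in> {i \<in> I. \<gamma> i g = 1}" using \<open>i \<in> I\<close> \<open>j \<in> I\<close> g by auto
    then show False using \<open>i \<noteq> j\<close> unfolding i0 by simp
  qed
  show "(\<Union>i\<in>I. {g \<in> X. \<gamma> i g = 1}) = X"
  proof (intro equalityI subsetI)
    fix g assume "g \<in> X"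
    then obtain i0 where "{i \<in> I. \<gamma> i g = 1} = {i0}" using single by blast
    then have "i0 \<in> I" "\<gamma> i0 g = 1" by auto
    then show "g \<in> (\<Union>i\<in>I. {g \<in> X. \<gamma> i g = 1})" using \<open>g \<in> X\<close> by blast
  qed blast
qed

locale ballot_style =
  fixes C N :: nat and Ncand :: "nat \<Rightarrow> nat set" and v :: "nat \<Rightarrow> nat"
  assumes part_cover: "(\<Union>c\<in>{1..C}. Ncand c) = {1..N}"
    and part_disj: "\<forall>c\<in>{1..C}. \<forall>c'\<in>{1..C}. c \<noteq> c' \<longrightarrow> Ncand c \<inter> Ncand c' = {}"
    and v_pos: "\<forall>c\<in>{1..C}. v c > 0"
begin

lemma Ncand_subset: "c \<in> {1..C} \<Longrightarrow> Ncand c \<subseteq> {1..N}"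
  using part_cover by blast

lemma finite_Ncand: "c \<in> {1..C} \<Longrightarrow> finite (Ncand c)"
  using Ncand_subset finite_subset by blast

lemma disjoint_family_on_Ncand: "disjoint_family_on Ncand {1..C}"
  using part_disj by (auto simp: disjoint_family_on_def)

lemma obtain_contest:
  assumes "i \<in> {1..N}"
  obtains c where "c \<in> {1..C}" "i \<in> Ncand c"
  using assms part_cover by blast

definition admissible_labelling :: "nat \<Rightarrow> (nat \<Rightarrow> nat) \<Rightarrow> bool" where
  "admissible_labelling B \<sigma> \<longleftrightarrow>
     bij_betw \<sigma> {1..N} {1..N} \<and> N \<le> B \<and> (\<forall>c\<in>{1..C}. (\<Sum>i\<in>Ncand c. \<sigma> i) \<le> v c * B)"

lemma D_solution_imp_admissible_labelling:
  assumes "D_solution C Ncand v N B bs"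
  shows "\<exists>\<sigma>. admissible_labelling B \<sigma>"
proof -
  let ?oc = "occ B bs"
  have ballots: "\<And>b. b \<in> {1..B} \<Longrightarrow> bs b \<in> ballots C Ncand v N"
    and inj: "inj_on ?oc {1..N}" and pos: "\<And>i. i \<in> {1..N} \<Longrightarrow> 1 \<le> ?oc i"
    using assms unfolding D_solution_def by (auto intro: inj_onI)
  define \<sigma> where "\<sigma> i = card {j \<in> {1..N}. ?oc j \<le> ?oc i}" for i
  have "bij_betw \<sigma> {1..N} {1..N}"
    using rank_bij_betw[OF _ inj] unfolding \<sigma>_def by simp
  moreover have "N \<le> B"
  proof -
    have "card {1..N} \<le> card {1..B}"
      by (rule card_inj_on_le[OF inj]) (use pos occ_le in auto)
    then show ?thesis by simp
  qed
  moreover have "(\<Sum>i\<in>Ncand c. \<sigma> i) \<le> v c * B" if c: "c \<in> {1..C}" for c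
  proof -
    have "(\<Sum>i\<in>Ncand c. \<sigma> i) \<le> (\<Sum>i\<in>Ncand c. ?oc i)"
      unfolding \<sigma>_def using Ncand_subset[OF c] by (intro sum_mono rank_le[OF inj pos]) auto
    also have "\<dots> = (\<Sum>b\<in>{1..B}. card (Ncand c \<inter> bs b))"
      by (rule sum_occ_eq_sum_card_inter[OF finite_Ncand[OF c]])
    also have "\<dots> \<le> (\<Sum>b\<in>{1..B}. v c)"
      using ballots c by (intro sum_mono) (auto simp: ballots_def)
    finally show ?thesis by (simp add: mult.commute)
  qed
  ultimately show ?thesis unfolding admissible_labelling_def by blast
qed

lemma admissible_labelling_contest_schedules:
  assumes "admissible_labelling B \<sigma>"
  obtains A where "\<And>c b. c \<in> {1..C} \<Longrightarrow> A c b \<subseteq> Ncand c"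
    and "\<And>c b. c \<in> {1..C} \<Longrightarrow> b \<in> {1..B} \<Longrightarrow> card (A c b) \<le> v c"
    and "\<And>c i. c \<in> {1..C} \<Longrightarrow> i \<in> Ncand c \<Longrightarrow> card {b \<in> {1..B}. i \<in> A c b} = \<sigma> i"
proof -
  have bij: "bij_betw \<sigma> {1..N} {1..N}" and "N \<le> B"
    and total: "\<And>c. c \<in> {1..C} \<Longrightarrow> (\<Sum>i\<in>Ncand c. \<sigma> i) \<le> v c * B"
    using assms unfolding admissible_labelling_def by auto
  have "\<forall>c\<in>{1..C}. \<exists>A. (\<forall>b. A b \<subseteq> Ncand c) \<and> (\<forall>b\<in>{1..B}. card (A b) \<le> v c) \<and>
          (\<forall>i\<in>Ncand c. card {b \<in> {1..B}. i \<in> A b} = \<sigma> i)"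
  proof
    fix c assume c: "c \<in> {1..C}"
    have "\<sigma> i \<le> B" if "i \<in> Ncand c" for i
      using bij_betw_apply[OF bij] Ncand_subset[OF c] that \<open>N \<le> B\<close> by fastforce
    then show "\<exists>A. (\<forall>b. A b \<subseteq> Ncand c) \<and> (\<forall>b\<in>{1..B}. card (A b) \<le> v c) \<and>
          (\<forall>i\<in>Ncand c. card {b \<in> {1..B}. i \<in> A b} = \<sigma> i)"
      by (rule wrap_around_schedule[OF finite_Ncand[OF c] _ total[OF c]]) blast+
  qed
  from bchoice[OF this] show ?thesis using that by blast
qed

lemma admissible_labelling_imp_D_solution:
  assumes "admissible_labelling B \<sigma>"
  shows "\<exists>bs. D_solution C Ncand v N B bs"
proof -
  have bij: "bij_betw \<sigma> {1..N} {1..N}" using assms unfolding admissible_labelling_def by auto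
  obtain A where A_sub: "\<And>c b. c \<in> {1..C} \<Longrightarrow> A c b \<subseteq> Ncand c"
    and A_card: "\<And>c b. c \<in> {1..C} \<Longrightarrow> b \<in> {1..B} \<Longrightarrow> card (A c b) \<le> v c"
    and A_occ: "\<And>c i. c \<in> {1..C} \<Longrightarrow> i \<in> Ncand c \<Longrightarrow> card {b \<in> {1..B}. i \<in> A c b} = \<sigma> i"
    using admissible_labelling_contest_schedules[OF assms] by blast
  define bs where "bs b = (\<Union>c\<in>{1..C}. A c b)" for b
  have inter: "Ncand c \<inter> bs b = A c b" if c: "c \<in> {1..C}" for c b
    using c A_sub disjoint_family_onD[OF disjoint_family_on_Ncand] unfolding bs_def by blast
  have occ: "occ B bs i = \<sigma> i" if "c \<in> {1..C}" "i \<in> Ncand c" for c i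
  proof -
    have "{b \<in> {1..B}. i \<in> bs b} = {b \<in> {1..B}. i \<in> A c b}" using inter[OF that(1)] that(2) by blast
    then show ?thesis using A_occ[OF that] unfolding occ_def by simp
  qed
  have "D_solution C Ncand v N B bs"
    unfolding D_solution_def
  proof (intro conjI ballI impI)
    fix b assume "b \<in> {1..B}"
    have "bs b \<subseteq> {1..N}" using A_sub Ncand_subset unfolding bs_def by blast
    then show "bs b \<in> ballots C Ncand v N"
      using A_card \<open>b \<in> {1..B}\<close> inter unfolding ballots_def by simp
  next
    fix i j assume "i \<in> {1..N}" "j \<in> {1..N}" "i \<noteq> j"
    then show "occ B bs i \<noteq> occ B bs j"
      using occ bij_betw_imp_inj_on[OF bij] by (metis obtain_contest inj_onD)
  next
    fix i assume "i \<in> {1..N}"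
    then show "1 \<le> occ B bs i"
      using occ bij_betw_apply[OF bij] by (metis obtain_contest atLeastAtMost_iff)
  qed
  then show ?thesis by blast
qed

lemma card_contests_containing_image:
  assumes bij: "bij_betw \<sigma> {1..N} {1..N}" and g: "g \<in> {1..N}"
  shows "card ({1..C} \<inter> {c. g \<in> \<sigma> ` Ncand c}) = 1"
proof -
  obtain i where i: "i \<in> {1..N}" "\<sigma> i = g"
    using bij_betw_imp_surj_on[OF bij] g by (metis imageE)
  obtain c where c: "c \<in> {1..C}" "i \<in> Ncand c" using obtain_contest[OF i(1)] .
  have "{1..C} \<inter> {c'. g \<in> \<sigma> ` Ncand c'} = {c}"
  proof safe
    fix c' j assume c': "c' \<in> {1..C}" and j: "j \<in> Ncand c'" and "g = \<sigma> j"
    then have "j = i"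
      using i Ncand_subset[OF c'] inj_onD[OF bij_betw_imp_inj_on[OF bij]] by blast
    then show "c' = c" using c c' j disjoint_family_onD[OF disjoint_family_on_Ncand] by blast
  qed (use c i in auto)
  then show ?thesis by simp
qed

lemma admissible_labelling_imp_M_solution:
  assumes "admissible_labelling B \<sigma>"
  shows "M_solution C Ncand v N B (\<lambda>c g. of_bool (g \<in> \<sigma> ` Ncand c))"
proof -
  have bij: "bij_betw \<sigma> {1..N} {1..N}" and "N \<le> B"
    and total: "\<And>c. c \<in> {1..C} \<Longrightarrow> (\<Sum>i\<in>Ncand c. \<sigma> i) \<le> v c * B"
    using assms unfolding admissible_labelling_def by auto
  have inj: "inj_on \<sigma> (Ncand c)" if "c \<in> {1..C}" for c
    using bij_betw_imp_inj_on[OF bij] Ncand_subset[OF that] by (rule inj_on_subset)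
  have image_sub: "\<sigma> ` Ncand c \<subseteq> {1..N}" if "c \<in> {1..C}" for c
    using bij_betw_imp_surj_on[OF bij] Ncand_subset[OF that] by blast
  have row: "(\<Sum>g\<in>{1..N}. of_bool (g \<in> \<sigma> ` Ncand c)) = card (Ncand c)" if "c \<in> {1..C}" for c
    using image_sub[OF that] card_image[OF inj[OF that]] by (simp add: Int_absorb1)
  have column: "(\<Sum>c\<in>{1..C}. of_bool (g \<in> \<sigma> ` Ncand c)) = (1::nat)" if "g \<in> {1..N}" for g
    using card_contests_containing_image[OF bij that] by simp
  have weight: "(\<Sum>g\<in>{1..N}. g * of_bool (g \<in> \<sigma> ` Ncand c)) \<le> v c * B" if c: "c \<in> {1..C}" for c
  proof -
    have "(\<Sum>g\<in>{1..N}. g * of_bool (g \<in> \<sigma> ` Ncand c)) = (\<Sum>g\<in>\<sigma> ` Ncand c. g)"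
      using image_sub[OF c] by (simp add: Int_absorb1)
    also have "\<dots> = (\<Sum>i\<in>Ncand c. \<sigma> i)" by (simp add: sum.reindex[OF inj[OF c]])
    finally show ?thesis using total[OF c] by simp
  qed
  have real_weight: "real B \<ge> (1 / real (v c)) *
      (\<Sum>g\<in>{1..N}. real g * real (of_bool (g \<in> \<sigma> ` Ncand c)))" if c: "c \<in> {1..C}" for c
    using v_pos c weight[OF c] by (simp only: weighted_sum_bound_iff)
  show ?thesis
    unfolding M_solution_def using row column real_weight \<open>N \<le> B\<close> by auto
qed

lemma M_solution_imp_admissible_labelling:
  assumes "M_solution C Ncand v N B \<gamma>"
  shows "\<exists>\<sigma>. admissible_labelling B \<sigma>"
proof -
  have binary: "\<And>c g. c \<in> {1..C} \<Longrightarrow> g \<in> {1..N} \<Longrightarrow> \<gamma> c g \<in> {0, 1}"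
    and row: "\<And>c. c \<in> {1..C} \<Longrightarrow> (\<Sum>g\<in>{1..N}. \<gamma> c g) = card (Ncand c)"
    and column: "\<And>g. g \<in> {1..N} \<Longrightarrow> (\<Sum>c\<in>{1..C}. \<gamma> c g) = 1"
    and weight: "\<And>c. c \<in> {1..C} \<Longrightarrow> (\<Sum>g\<in>{1..N}. g * \<gamma> c g) \<le> v c * B"
    and "N \<le> B"
    using assms v_pos weighted_sum_bound_iff unfolding M_solution_def by auto
  define G where "G c = {g \<in> {1..N}. \<gamma> c g = 1}" for c
  have "\<forall>c\<in>{1..C}. \<exists>h. bij_betw h (Ncand c) (G c)"
  proof
    fix c assume c: "c \<in> {1..C}"
    have "card (G c) = card (Ncand c)"
      unfolding G_def using row[OF c] sum_binary_eq_card[of "{1..N}" "\<gamma> c"] binary[OF c] by simp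
    then show "\<exists>h. bij_betw h (Ncand c) (G c)"
      by (intro finite_same_card_bij finite_Ncand[OF c]) (simp_all add: G_def)
  qed
  then obtain h where h: "\<And>c. c \<in> {1..C} \<Longrightarrow> bij_betw (h c) (Ncand c) (G c)"
    by (metis bchoice)
  have disj_G: "disjoint_family_on G {1..C}" and cover_G: "(\<Union>c\<in>{1..C}. G c) = {1..N}"
    unfolding G_def using binary_column_sums_one_partition[of "{1..C}" "{1..N}" \<gamma>] binary column
    by auto
  obtain \<sigma> where bij: "bij_betw \<sigma> (\<Union>c\<in>{1..C}. Ncand c) (\<Union>c\<in>{1..C}. G c)"
    and \<sigma>_eq: "\<And>c i. c \<in> {1..C} \<Longrightarrow> i \<in> Ncand c \<Longrightarrow> \<sigma> i = h c i"
    using bij_betw_UN_disjoint_family[OF h disjoint_family_on_Ncand disj_G] by blast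
  have "(\<Sum>i\<in>Ncand c. \<sigma> i) \<le> v c * B" if c: "c \<in> {1..C}" for c
  proof -
    have "(\<Sum>i\<in>Ncand c. \<sigma> i) = (\<Sum>i\<in>Ncand c. h c i)" using \<sigma>_eq[OF c] by simp
    also have "\<dots> = (\<Sum>g\<in>G c. g)" by (rule sum.reindex_bij_betw[OF h[OF c]])
    also have "\<dots> = (\<Sum>g\<in>{1..N}. g * \<gamma> c g)"
      unfolding G_def using sum_mult_binary_eq[of "{1..N}" "\<gamma> c"] binary[OF c] by simp
    finally show ?thesis using weight[OF c] by simp
  qed
  then show ?thesis
    using bij \<open>N \<le> B\<close> unfolding admissible_labelling_def part_cover cover_G by blast
qed

lemma D_feasible_iff_M_feasible: "D_feasible C Ncand v N B \<longleftrightarrow> M_feasible C Ncand v N B"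
  unfolding D_feasible_def M_feasible_def
  using D_solution_imp_admissible_labelling admissible_labelling_imp_D_solution
    M_solution_imp_admissible_labelling admissible_labelling_imp_M_solution
  by meson

lemma admissible_labelling_id: "admissible_labelling (N * N) id"
  unfolding admissible_labelling_def
proof (intro conjI ballI)
  fix c assume c: "c \<in> {1..C}"
  have "(\<Sum>i\<in>Ncand c. id i) \<le> (\<Sum>i\<in>{1..N}. id i)"
    using Ncand_subset[OF c] by (intro sum_mono2) auto
  also have "\<dots> \<le> (\<Sum>i\<in>{1..N}. N)" by (intro sum_mono) simp
  also have "\<dots> \<le> v c * (N * N)" using v_pos c by (simp add: Suc_le_eq)
  finally show "(\<Sum>i\<in>Ncand c. id i) \<le> v c * (N * N)" .
qed (auto simp: le_square)

end

theorem proposition5: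
  fixes C N :: nat and Ncand :: "nat \<Rightarrow> nat set" and v :: "nat \<Rightarrow> nat"
  assumes part_cover: "(\<Union>c\<in>{1..C}. Ncand c) = {1..N}"
    and part_disj: "\<forall>c\<in>{1..C}. \<forall>c'\<in>{1..C}. c \<noteq> c' \<longrightarrow> Ncand c \<inter> Ncand c' = {}"
    and part_ne: "\<forall>c\<in>{1..C}. Ncand c \<noteq> {}"
    and v_pos: "\<forall>c\<in>{1..C}. v c > 0"
  shows "(\<exists>opt. D_feasible C Ncand v N opt \<and> (\<forall>B. D_feasible C Ncand v N B \<longrightarrow> opt \<le> B) \<and>
                M_feasible C Ncand v N opt \<and> (\<forall>B. M_feasible C Ncand v N B \<longrightarrow> opt \<le> B))
         \<and> (\<forall>B \<gamma>. M_optimal C Ncand v N B \<gamma> \<longrightarrow> (\<exists>bs. D_solution C Ncand v N B bs))"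
proof -
  interpret ballot_style C N Ncand v
    using part_cover part_disj v_pos by unfold_locales
  have "M_feasible C Ncand v N (N * N)"
    using admissible_labelling_imp_M_solution[OF admissible_labelling_id] unfolding M_feasible_def by blast
  then have "M_feasible C Ncand v N (LEAST B. M_feasible C Ncand v N B)"
    and "\<And>B. M_feasible C Ncand v N B \<Longrightarrow> (LEAST B. M_feasible C Ncand v N B) \<le> B"
    by (auto intro: LeastI Least_le)
  then show ?thesis
    using D_feasible_iff_M_feasible M_solution_imp_admissible_labelling admissible_labelling_imp_D_solution
    unfolding M_optimal_def by blast
qed

end
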